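(* Let $\Sigma=(\sigma_0,\sigma_\infty,\sigma_1,\tau)$ be a special admissible 4-tuple in $S_{2n}^4$ such that $\sigma_1\tau$ is a product of $n-4$ disjoint transpositions and a disjoint 4-cycle. Then there exist integers $1\le h<k_1<k_2<2n-h$ with $h\equiv k_1\equiv k_2\pmod2$ such that $\sigma_0=\prod_{i=1}^{h}(i,2n+1-i)\prod_{j=1}^{(k_1-h)/2}(h+j,k_1+1-j)\prod_{t=1}^{(k_2-k_1)/2}(k_1+t,k_2+1-t)\prod_{v=1}^{(2n-h-k_2)/2}(k_2+v,2n-h+1-v)$ and $\sigma_1\tau=\prod_{i=1}^{h-1}(i,2n-i)\prod_{j=1}^{(k_1-h)/2-1}(h+j,k_1-j)\prod_{t=1}^{(k_2-k_1)/2-1}(k_1+t,k_2-t)\prod_{v=1}^{(2n-h-k_2)/2-1}(k_2+v,2n-h-v)\cdot(2n-h,\,h,\,k_1,\,k_2)$. In particular $\sigma_1\tau$ fixes exactly the indices $2n$, $(k_1+h)/2$, $(k_1+k_2)/2$, $(2n-h+k_2)/2$. Moreover, for each such $(h,k_1,k_2)$ there are exactly two special tuples with these $\sigma_0$ and $\sigma_1\tau$, corresponding to $\tau\in\{(h,k_2),(k_1,2n-h)\}$.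
   Context: Permutation products are read left to right ($\sigma\sigma'$: first $\sigma$, then $\sigma'$); $(a,b,c,e)$ denotes the cycle $a\mapsto b\mapsto c\mapsto e\mapsto a$. An admissible 4-tuple is $(\sigma_0,\sigma_\infty,\sigma_1,\tau)\in S_{2n}^4$ with $\sigma_0$ a product of $n$ disjoint transpositions, $\sigma_\infty$ a $2n$-cycle, $\sigma_1$ a product of $n-2$ disjoint transpositions, $\tau$ a transposition, and $\sigma_0\sigma_\infty\sigma_1\tau=\mathrm{id}$. It is special if $\sigma_\infty=(2n,2n-1,\dots,1)$ and $\sigma_1(2n)=\tau(2n)=2n$. *)

theory Defs
  imports "HOL-Combinatorics.Combinatorics"
begin

text \<open>Permutations of the index set {1..2n} are functions nat => nat fixing every point
outside {1..2n}.  Products are read left to right.\<close>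

definition pmul :: "(nat \<Rightarrow> nat) \<Rightarrow> (nat \<Rightarrow> nat) \<Rightarrow> (nat \<Rightarrow> nat)" where
  "pmul s t = t \<circ> s"

definition idx :: "nat \<Rightarrow> nat set" where
  "idx n = {1..2*n}"

definition tlist_prod :: "(nat \<times> nat) list \<Rightarrow> nat \<Rightarrow> nat" where
  "tlist_prod ps = foldr (\<lambda>(a,b) f. pmul f (transpose a b)) ps id"

definition disj_transp_prod :: "nat set \<Rightarrow> nat \<Rightarrow> (nat \<Rightarrow> nat) \<Rightarrow> bool" where
  "disj_transp_prod S m s \<longleftrightarrow>
     (\<exists>ps. length ps = m \<and> distinct (concat (map (\<lambda>(a,b). [a,b]) ps))
          \<and> set (concat (map (\<lambda>(a,b). [a,b]) ps)) \<subseteq> S \<and> s = tlist_prod ps)"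

text \<open>s is a cycle through all elements of S (cycle_of_list [a,b,c] is a -> b -> c -> a).\<close>
definition full_cycle :: "nat set \<Rightarrow> (nat \<Rightarrow> nat) \<Rightarrow> bool" where
  "full_cycle S s \<longleftrightarrow> (\<exists>cs. distinct cs \<and> set cs = S \<and> s = cycle_of_list cs)"

definition is_transposition :: "nat set \<Rightarrow> (nat \<Rightarrow> nat) \<Rightarrow> bool" where
  "is_transposition S t \<longleftrightarrow> (\<exists>a\<in>S. \<exists>b\<in>S. a \<noteq> b \<and> t = transpose a b)"

definition admissible ::
  "nat \<Rightarrow> (nat \<Rightarrow> nat) \<times> (nat \<Rightarrow> nat) \<times> (nat \<Rightarrow> nat) \<times> (nat \<Rightarrow> nat) \<Rightarrow> bool" where
  "admissible n T \<longleftrightarrow> (case T of (s0, sinf, s1, t) \<Rightarrow>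
      2 \<le> n \<and>
      disj_transp_prod (idx n) n s0 \<and> full_cycle (idx n) sinf \<and>
      disj_transp_prod (idx n) (n - 2) s1 \<and> is_transposition (idx n) t \<and>
      pmul (pmul (pmul s0 sinf) s1) t = id)"

definition sigma_inf_std :: "nat \<Rightarrow> nat \<Rightarrow> nat" where
  "sigma_inf_std n = cycle_of_list (rev [1..<2*n+1])"

definition special ::
  "nat \<Rightarrow> (nat \<Rightarrow> nat) \<times> (nat \<Rightarrow> nat) \<times> (nat \<Rightarrow> nat) \<times> (nat \<Rightarrow> nat) \<Rightarrow> bool" where
  "special n T \<longleftrightarrow> admissible n T \<and> (case T of (s0, sinf, s1, t) \<Rightarrow>
      sinf = sigma_inf_std n \<and> s1 (2*n) = 2*n \<and> t (2*n) = 2*n)"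

definition transp_and_4cycle :: "nat set \<Rightarrow> nat \<Rightarrow> (nat \<Rightarrow> nat) \<Rightarrow> bool" where
  "transp_and_4cycle S m s \<longleftrightarrow> 4 \<le> m \<and>
     (\<exists>ps a b c e. length ps = m - 4 \<and>
        distinct (concat (map (\<lambda>(x,y). [x,y]) ps) @ [a,b,c,e]) \<and>
        set (concat (map (\<lambda>(x,y). [x,y]) ps) @ [a,b,c,e]) \<subseteq> S \<and>
        s = pmul (tlist_prod ps) (cycle_of_list [a,b,c,e]))"

definition tprod :: "nat \<Rightarrow> (nat \<Rightarrow> nat) \<Rightarrow> (nat \<Rightarrow> nat) \<Rightarrow> nat \<Rightarrow> nat" where
  "tprod m f g = tlist_prod (map (\<lambda>j. (f j, g j)) [1..<m+1])"

definition sigma0_form :: "nat \<Rightarrow> nat \<Rightarrow> nat \<Rightarrow> nat \<Rightarrow> nat \<Rightarrow> nat" where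
  "sigma0_form n h k1 k2 =
     pmul (pmul (pmul
       (tprod h (\<lambda>i. i) (\<lambda>i. 2*n + 1 - i))
       (tprod ((k1 - h) div 2) (\<lambda>j. h + j) (\<lambda>j. k1 + 1 - j)))
       (tprod ((k2 - k1) div 2) (\<lambda>t. k1 + t) (\<lambda>t. k2 + 1 - t)))
       (tprod ((2*n - h - k2) div 2) (\<lambda>v. k2 + v) (\<lambda>v. 2*n - h + 1 - v))"

definition s1tau_form :: "nat \<Rightarrow> nat \<Rightarrow> nat \<Rightarrow> nat \<Rightarrow> nat \<Rightarrow> nat" where
  "s1tau_form n h k1 k2 =
     pmul (pmul (pmul (pmul
       (tprod (h - 1) (\<lambda>i. i) (\<lambda>i. 2*n - i))
       (tprod ((k1 - h) div 2 - 1) (\<lambda>j. h + j) (\<lambda>j. k1 - j)))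
       (tprod ((k2 - k1) div 2 - 1) (\<lambda>t. k1 + t) (\<lambda>t. k2 - t)))
       (tprod ((2*n - h - k2) div 2 - 1) (\<lambda>v. k2 + v) (\<lambda>v. 2*n - h - v)))
       (cycle_of_list [2*n - h, h, k1, k2])"

definition valid_triple :: "nat \<Rightarrow> nat \<Rightarrow> nat \<Rightarrow> nat \<Rightarrow> bool" where
  "valid_triple n h k1 k2 \<longleftrightarrow> 1 \<le> h \<and> h < k1 \<and> k1 < k2 \<and> k2 < 2*n - h \<and>
     h mod 2 = k1 mod 2 \<and> k1 mod 2 = k2 mod 2"

end

(*
  Write M = sigma0 and P = sigma1 tau.  As sigma_inf is y |-> y - 1 (and 1 |-> 2n), the relation
  sigma0 sigma_inf sigma1 tau = 1 says P y = M (y + 1) for y < 2n, and P (2n) = 2n forces M 1 = 2n.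
  Off its 4-cycle C the permutation P is an involution, which turns P y = M (y + 1) into
  M y = M (y + 1) + 1.  So M y + y is constant on each stretch between consecutive points of C:
  M reverses the blocks cut out by C.  Comparing the two ends gives C = {h < k1 < k2 < 2n - h}
  with P running through C in increasing order, and as M has no fixed points every block has
  even length.  Conversely sigma1 = (sigma1 tau) tau is an involution exactly when tau conjugates
  the 4-cycle of sigma1 tau to its inverse, i.e. when tau is one of its two diagonals.
*)
theory Submission
  imports Defs
begin

section \<open>Products of disjoint transpositions\<close>

definition flat_pairs :: "(nat \<times> nat) list \<Rightarrow> nat list" where
  "flat_pairs ps = concat (map (\<lambda>(a,b). [a,b]) ps)"

lemma flat_pairs_simps [simp]:
  "flat_pairs [] = []"
  "flat_pairs ((a,b) # ps) = a # b # flat_pairs ps"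
  "flat_pairs (xs @ ys) = flat_pairs xs @ flat_pairs ys"
  by (auto simp: flat_pairs_def)

lemma length_flat_pairs [simp]: "length (flat_pairs ps) = 2 * length ps"
  by (induction ps) (auto simp: flat_pairs_def)

lemma tlist_prod_Nil [simp]: "tlist_prod [] x = x"
  by (simp add: tlist_prod_def)

lemma tlist_prod_Cons: "tlist_prod ((a,b) # ps) x = transpose a b (tlist_prod ps x)"
  by (simp add: tlist_prod_def pmul_def)

lemma tlist_prod_append: "tlist_prod (xs @ ys) x = tlist_prod xs (tlist_prod ys x)"
  by (induction xs) (auto simp: tlist_prod_Cons)

lemma pmul_tlist_prod: "pmul (tlist_prod xs) (tlist_prod ys) = tlist_prod (ys @ xs)"
  by (auto simp: pmul_def tlist_prod_append)

lemma tlist_prod_outside: "x \<notin> set (flat_pairs ps) \<Longrightarrow> tlist_prod ps x = x"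
  by (induction ps) (auto simp: tlist_prod_Cons)

lemma tlist_prod_pair:
  assumes "distinct (flat_pairs ps)" "(a,b) \<in> set ps"
  shows "tlist_prod ps a = b \<and> tlist_prod ps b = a"
  using assms
proof (induction ps)
  case (Cons p ps)
  obtain c d where p: "p = (c,d)" by fastforce
  show ?case
  proof (cases "(a,b) = p")
    case True
    then show ?thesis using Cons.prems p by (auto simp: tlist_prod_Cons tlist_prod_outside)
  next
    case False
    then have ab: "(a,b) \<in> set ps" using Cons.prems by auto
    then have "a \<in> set (flat_pairs ps)" "b \<in> set (flat_pairs ps)"
      by (auto simp: flat_pairs_def)
    with Cons p ab show ?thesis by (auto simp: tlist_prod_Cons transpose_def)
  qed
qed simp

lemma tlist_prod_inside:
  assumes "distinct (flat_pairs ps)" "x \<in> set (flat_pairs ps)"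
  shows "tlist_prod ps x \<in> set (flat_pairs ps) \<and> tlist_prod ps x \<noteq> x
    \<and> tlist_prod ps (tlist_prod ps x) = x"
  using assms
proof (induction ps)
  case (Cons p ps)
  obtain c d where p: "p = (c,d)" by fastforce
  show ?case
  proof (cases "x \<in> set (flat_pairs ps)")
    case True
    then show ?thesis using Cons p by (auto simp: tlist_prod_Cons transpose_def)
  next
    case False
    then show ?thesis using Cons.prems p by (auto simp: tlist_prod_Cons tlist_prod_outside transpose_def)
  qed
qed simp

lemma tlist_prod_involution:
  "distinct (flat_pairs ps) \<Longrightarrow> tlist_prod ps (tlist_prod ps x) = x"
  by (metis tlist_prod_inside tlist_prod_outside)

lemma disj_transp_prod_involution: "disj_transp_prod S m s \<Longrightarrow> s (s x) = x"
  unfolding disj_transp_prod_def flat_pairs_def[symmetric] by (auto intro: tlist_prod_involution)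

lemma disj_transp_prod_perfect:
  assumes "disj_transp_prod S m s" "finite S" "card S = 2*m"
  shows "x \<in> S \<Longrightarrow> s x \<in> S \<and> s x \<noteq> x" "x \<notin> S \<Longrightarrow> s x = x"
proof -
  obtain ps where ps: "length ps = m" "distinct (flat_pairs ps)" "set (flat_pairs ps) \<subseteq> S"
    "s = tlist_prod ps"
    using assms(1) unfolding disj_transp_prod_def flat_pairs_def[symmetric] by auto
  have "card (set (flat_pairs ps)) = card S"
    using ps(1,2) assms(3) by (simp add: distinct_card)
  then have S: "set (flat_pairs ps) = S"
    using ps(3) assms(2) by (simp add: card_subset_eq)
  show "x \<in> S \<Longrightarrow> s x \<in> S \<and> s x \<noteq> x" "x \<notin> S \<Longrightarrow> s x = x"
    using tlist_prod_inside[OF ps(2), of x] tlist_prod_outside[of x ps] ps(4) S by auto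
qed

definition mirror_pairs :: "nat \<Rightarrow> nat \<Rightarrow> nat \<Rightarrow> (nat \<times> nat) list" where
  "mirror_pairs p q m = map (\<lambda>j. (p + j, q + 1 - j)) [1..<m+1]"

lemma length_mirror_pairs [simp]: "length (mirror_pairs p q m) = m"
  by (simp add: mirror_pairs_def)

lemma mirror_pairs_Suc: "mirror_pairs p q (Suc m) = mirror_pairs p q m @ [(p + Suc m, q - m)]"
  by (simp add: mirror_pairs_def)

lemma set_mirror_pairs:
  "p + 2*m \<le> q \<Longrightarrow> set (flat_pairs (mirror_pairs p q m)) = {p+1..p+m} \<union> {q+1-m..q}"
proof (induction m)
  case (Suc m)
  have "{p+1..p + Suc m} = insert (p + Suc m) {p+1..p+m}"
    "{q+1 - Suc m..q} = insert (q - m) {q+1-m..q}" using Suc.prems by auto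
  with Suc show ?case by (simp add: mirror_pairs_Suc insert_commute)
qed (simp add: mirror_pairs_def)

lemma distinct_mirror_pairs: "p + 2*m \<le> q \<Longrightarrow> distinct (flat_pairs (mirror_pairs p q m))"
proof (induction m)
  case (Suc m)
  then show ?case by (auto simp: mirror_pairs_Suc set_mirror_pairs)
qed (simp add: mirror_pairs_def)

lemma tlist_prod_mirror:
  assumes "distinct (flat_pairs L)" "set (mirror_pairs p q m) \<subseteq> set L" "p + 2*m \<le> q"
    and "x \<in> {p+1..p+m} \<union> {q+1-m..q}"
  shows "tlist_prod L x = p + q + 1 - x"
proof (cases "x \<le> p + m")
  case True
  then have "(x, p+q+1-x) = (p + (x-p), q+1-(x-p))" "x - p \<in> set [1..<m+1]"
    using assms(3,4) by auto
  then have "(x, p+q+1-x) \<in> set (mirror_pairs p q m)"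
    unfolding mirror_pairs_def by (metis (no_types, lifting) image_eqI set_map)
  then show ?thesis using tlist_prod_pair assms by blast
next
  case False
  then have "(p+q+1-x, x) \<in> set (mirror_pairs p q m)"
    using assms(3,4) unfolding mirror_pairs_def by (auto intro!: image_eqI[where x="q+1-x"])
  then show ?thesis using tlist_prod_pair assms by blast
qed

lemma tlist_prod_mirror_odd:
  assumes "distinct (flat_pairs L)" "set (mirror_pairs p (p+2*m-1) (m-1)) \<subseteq> set L"
    and "p + m \<notin> set (flat_pairs L)" "p < x" "x < p + 2*m"
  shows "tlist_prod L x = 2*p + 2*m - x"
proof (cases "x = p + m")
  case True
  then show ?thesis using tlist_prod_outside[OF assms(3)] by simp
next
  case False
  then have "tlist_prod L x = p + (p+2*m-1) + 1 - x"
    using assms by (intro tlist_prod_mirror[OF assms(1,2)]) auto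
  then show ?thesis using assms(4,5) by simp
qed

section \<open>Cycles\<close>

lemma sigma_inf_std_apply:
  assumes "1 \<le> x" "x \<le> 2*n"
  shows "sigma_inf_std n x = (if x = 1 then 2*n else x - 1)"
proof -
  define cs where "cs = rev [1..<2*n+1]"
  have len: "length cs = 2*n" by (simp add: cs_def)
  have nth: "cs ! i = 2*n - i" if "i < 2*n" for i
  proof -
    have "[1..<2*n+1] ! (2*n - Suc i) = 1 + (2*n - Suc i)"
      by (rule nth_upt) (use that in simp)
    moreover have "cs ! i = [1..<2*n+1] ! (length [1..<2*n+1] - Suc i)"
      unfolding cs_def by (rule rev_nth) (use that in simp)
    ultimately show ?thesis using that by simp
  qed
  have "map (cycle_of_list cs ^^ 1) cs = rotate 1 cs"
    by (rule cyclic_rotation) (simp add: cs_def)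
  then have rot: "map (cycle_of_list cs) cs = rotate1 cs" by simp
  define i where "i = 2*n - x"
  have i: "i < 2*n" using assms by (simp add: i_def)
  have "cycle_of_list cs x = cycle_of_list cs (cs ! i)"
    using nth[OF i] assms by (simp add: i_def)
  also have "\<dots> = rotate1 cs ! i"
    using arg_cong[OF rot, of "\<lambda>l. l ! i"] i len by simp
  also have "\<dots> = cs ! (Suc i mod (2*n))" using nth_rotate1[of i cs] i len by simp
  also have "\<dots> = (if x = 1 then 2*n else x - 1)"
    using assms nth[of 0] nth[of "Suc i"] by (cases "x = 1") (auto simp: i_def)
  finally show ?thesis by (simp add: sigma_inf_std_def cs_def)
qed

lemma sigma_inf_std_outside: "x \<notin> idx n \<Longrightarrow> sigma_inf_std n x = x"
  unfolding sigma_inf_std_def idx_def by (rule id_outside_supp) auto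

lemma cycle_of_list_4:
  assumes "distinct [a,b,c,e]"
  shows "cycle_of_list [a,b,c,e] a = b" "cycle_of_list [a,b,c,e] b = c"
    "cycle_of_list [a,b,c,e] c = e" "cycle_of_list [a,b,c,e] e = a"
    "x \<notin> {a,b,c,e} \<Longrightarrow> cycle_of_list [a,b,c,e] x = x"
  using assms by (auto simp: transpose_def)

definition four_cycle :: "(nat \<Rightarrow> nat) \<Rightarrow> nat \<Rightarrow> nat \<Rightarrow> nat \<Rightarrow> nat \<Rightarrow> bool" where
  "four_cycle P a b c e \<longleftrightarrow> distinct [a,b,c,e] \<and> P a = b \<and> P b = c \<and> P c = e \<and> P e = a"

lemma four_cycle_closed: "four_cycle P a b c e \<Longrightarrow> x \<in> {a,b,c,e} \<Longrightarrow> P x \<in> {a,b,c,e}"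
  by (auto simp: four_cycle_def)

lemma four_cycle_moves: "four_cycle P a b c e \<Longrightarrow> x \<in> {a,b,c,e} \<Longrightarrow> P x \<noteq> x"
  by (auto simp: four_cycle_def)

lemma four_cycle_rotate:
  assumes "four_cycle P a b c e" "x \<in> {a,b,c,e}"
  shows "four_cycle P x (P x) (P (P x)) (P (P (P x)))"
  using assms by (auto simp: four_cycle_def)

lemma four_cycle_cases:
  assumes "four_cycle P a b c e" "{a,b,c,e} = {h,k1,k2,g}" "distinct [h,k1,k2,g]" "P g = h"
  shows "(P h = k1 \<and> P k1 = k2 \<and> P k2 = g) \<or> (P h = k2 \<and> P k2 = k1 \<and> P k1 = g)"
proof -
  have "four_cycle P g h (P h) (P (P h))"
    using four_cycle_rotate[OF assms(1), of g] assms(2,4) by auto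
  then have orbit: "distinct [g, h, P h, P (P h)]" "P (P (P h)) = g"
    by (simp_all add: four_cycle_def)
  have "P h \<in> {a,b,c,e}"
    using four_cycle_closed[OF assms(1), of h] assms(2) by blast
  then have "P h \<in> {h,k1,k2,g}" "P (P h) \<in> {h,k1,k2,g}"
    using four_cycle_closed[OF assms(1), of "P h"] assms(2) by simp_all
  moreover have "P h \<noteq> h" "P h \<noteq> g" "P (P h) \<noteq> h" "P (P h) \<noteq> g" "P (P h) \<noteq> P h"
    using orbit(1) by auto
  ultimately have "P h = k1 \<and> P (P h) = k2 \<or> P h = k2 \<and> P (P h) = k1" by auto
  then show ?thesis using orbit(2) by auto
qed

lemma four_elements_sorted:
  fixes a b c e :: nat
  assumes "distinct [a,b,c,e]"
  obtains h k1 k2 g where "h < k1" "k1 < k2" "k2 < g" "{a,b,c,e} = {h,k1,k2,g}"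
proof -
  define xs where "xs = sorted_list_of_set {a,b,c,e}"
  have "length xs = 4" using assms by (simp add: xs_def)
  then obtain h k1 k2 g where xs: "xs = [h,k1,k2,g]"
    by (auto simp: numeral_eq_Suc length_Suc_conv)
  have "sorted_wrt (<) xs" unfolding xs_def by (rule strict_sorted_list_of_set)
  moreover have "set xs = {a,b,c,e}" unfolding xs_def by (rule set_sorted_list_of_set) simp
  ultimately show ?thesis using that[of h k1 k2 g] xs by auto
qed

lemma transp_and_4cycleE:
  assumes "transp_and_4cycle S m P"
  obtains a b c e where "four_cycle P a b c e" "{a,b,c,e} \<subseteq> S"
    "\<And>y. y \<notin> {a,b,c,e} \<Longrightarrow> P (P y) = y" "\<And>y. y \<notin> S \<Longrightarrow> P y = y"
proof -
  obtain ps a b c e where ps: "distinct (flat_pairs ps @ [a,b,c,e])"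
    "set (flat_pairs ps @ [a,b,c,e]) \<subseteq> S" "P = pmul (tlist_prod ps) (cycle_of_list [a,b,c,e])"
    using assms unfolding transp_and_4cycle_def flat_pairs_def[symmetric] by blast
  have dist: "distinct [a,b,c,e]" and dps: "distinct (flat_pairs ps)" using ps(1) by simp_all
  have P: "P x = cycle_of_list [a,b,c,e] (tlist_prod ps x)" for x
    using ps(3) by (simp add: pmul_def)
  have off: "tlist_prod ps x = x" if "x \<in> {a,b,c,e}" for x
    using that ps(1) by (intro tlist_prod_outside) auto
  have "four_cycle P a b c e"
    using dist off cycle_of_list_4[OF dist] by (simp add: four_cycle_def P)
  moreover have "P (P y) = y" if "y \<notin> {a,b,c,e}" for y
  proof (cases "y \<in> set (flat_pairs ps)")
    case True
    then have "tlist_prod ps y \<in> set (flat_pairs ps)" "tlist_prod ps (tlist_prod ps y) = y"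
      using tlist_prod_inside[OF dps] by blast+
    moreover from this(1) have "tlist_prod ps y \<notin> {a,b,c,e}" using ps(1) by auto
    ultimately show ?thesis using that by (simp add: P cycle_of_list_4(5)[OF dist])
  next
    case False
    then show ?thesis using that
      by (simp add: P tlist_prod_outside cycle_of_list_4(5)[OF dist])
  qed
  moreover have "P y = y" if "y \<notin> S" for y
  proof -
    have "y \<notin> {a,b,c,e}" "tlist_prod ps y = y"
      using that ps(2) by (auto intro: tlist_prod_outside)
    then show ?thesis unfolding P by (simp add: cycle_of_list_4(5)[OF dist])
  qed
  ultimately show ?thesis using that ps(2) by auto
qed

lemma transpose_mult_four_cycle_involution:
  assumes F: "four_cycle F c0 c1 c2 c3" and uv: "u \<noteq> v"
    and inv: "\<And>x. transpose u v (F (transpose u v (F x))) = x"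
  shows "transpose u v = transpose c0 c2 \<or> transpose u v = transpose c1 c3"
proof -
  have F_vals: "F c0 = c1" "F c1 = c2" "F c2 = c3" "F c3 = c0" and dist: "distinct [c0,c1,c2,c3]"
    using F by (simp_all add: four_cycle_def)
  \<comment> \<open>Away from \<open>{u, v}\<close> the transposition does nothing, and \<open>F\<^sup>2\<close> has no fixed point
    on the cycle.\<close>
  have hit: "F x \<in> {u,v} \<or> F (F x) \<in> {u,v}" if "x \<in> {c0,c1,c2,c3}" for x
  proof (rule ccontr)
    assume "\<not> ?thesis"
    then have "transpose u v (F (transpose u v (F x))) = F (F x)" by (simp add: transpose_def)
    moreover have "F (F x) \<noteq> x" using that F_vals dist by auto
    ultimately show False using inv by simp
  qed
  have c: "c1 \<in> {u,v} \<or> c2 \<in> {u,v}" "c2 \<in> {u,v} \<or> c3 \<in> {u,v}" "c3 \<in> {u,v} \<or> c0 \<in> {u,v}"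
    "c0 \<in> {u,v} \<or> c1 \<in> {u,v}"
    using hit[of c0] hit[of c1] hit[of c2] hit[of c3] unfolding F_vals by simp_all
  have same: "transpose u v = transpose x y" if "x \<in> {u,v}" "y \<in> {u,v}" "x \<noteq> y" for x y
    using that by (auto simp: transpose_commute)
  show ?thesis
  proof (cases "c1 \<in> {u,v}")
    case True
    then have "c3 \<in> {u,v}" using c dist by auto
    then show ?thesis using same[of c1 c3] True dist by simp
  next
    case False
    then have "c0 \<in> {u,v}" "c2 \<in> {u,v}" using c by auto
    then show ?thesis using same[of c0 c2] dist by simp
  qed
qed

section \<open>The normal form\<close>

lemma valid_tripleE:
  assumes "valid_triple n h k1 k2"
  obtains a b c where "k1 = h + 2*a" "k2 = k1 + 2*b" "2*n = k2 + 2*c + h"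
    "1 \<le> a" "1 \<le> b" "1 \<le> c" "1 \<le> h"
proof -
  from assms have v: "1 \<le> h" "h < k1" "k1 < k2" "k2 < 2*n - h"
    "h mod 2 = k1 mod 2" "k1 mod 2 = k2 mod 2"
    by (auto simp: valid_triple_def)
  have "h \<le> 2*n" using v(4) by linarith
  then have "(2*n - h) mod 2 = h mod 2" by (simp add: mod2_eq_if)
  then have "2 dvd k1 - h" "2 dvd k2 - k1" "2 dvd (2*n - h) - k2"
    using v by (auto intro!: mod_eq_dvd_iff_nat[THEN iffD1])
  then obtain a b c where "k1 - h = 2*a" "k2 - k1 = 2*b" "2*n - h - k2 = 2*c"
    by (meson dvdE)
  moreover note v(1-4)
  ultimately have "k1 = h + 2*a" "k2 = k1 + 2*b" "2*n = k2 + 2*c + h"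
    "1 \<le> a" "1 \<le> b" "1 \<le> c" by linarith+
  with v(1) show ?thesis using that by blast
qed

lemma split_at_four_points:
  fixes x p q r s :: nat
  obtains "x < p" | "x = p" | "p < x" "x < q" | "x = q" | "q < x" "x < r" | "x = r"
    | "r < x" "x < s" | "x = s" | "s < x"
proof -
  have "x < p \<or> x = p \<or> p < x" "x < q \<or> x = q \<or> q < x" "x < r \<or> x = r \<or> r < x"
    "x < s \<or> x = s \<or> s < x" by auto
  then show ?thesis using that by fast
qed

definition sigma0_fun :: "nat \<Rightarrow> nat \<Rightarrow> nat \<Rightarrow> nat \<Rightarrow> nat \<Rightarrow> nat" where
  "sigma0_fun n h k1 k2 y =
     (if y \<le> h \<or> 2*n - h < y then 2*n + 1 - y
      else if y \<le> k1 then h + 1 + k1 - y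
      else if y \<le> k2 then k1 + 1 + k2 - y
      else k2 + 1 + 2*n - h - y)"

definition s1tau_fun :: "nat \<Rightarrow> nat \<Rightarrow> nat \<Rightarrow> nat \<Rightarrow> nat \<Rightarrow> nat" where
  "s1tau_fun n h k1 k2 y = (if 1 \<le> y \<and> y < 2*n then sigma0_fun n h k1 k2 (y + 1) else y)"

definition sigma0_pairs :: "nat \<Rightarrow> nat \<Rightarrow> nat \<Rightarrow> nat \<Rightarrow> (nat \<times> nat) list" where
  "sigma0_pairs n h k1 k2 =
     mirror_pairs k2 (2*n - h) ((2*n - h - k2) div 2) @ mirror_pairs k1 k2 ((k2 - k1) div 2)
     @ mirror_pairs h k1 ((k1 - h) div 2) @ mirror_pairs 0 (2*n) h"

definition s1tau_pairs :: "nat \<Rightarrow> nat \<Rightarrow> nat \<Rightarrow> nat \<Rightarrow> (nat \<times> nat) list" where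
  "s1tau_pairs n h k1 k2 =
     mirror_pairs k2 (2*n - h - 1) ((2*n - h - k2) div 2 - 1)
     @ mirror_pairs k1 (k2 - 1) ((k2 - k1) div 2 - 1)
     @ mirror_pairs h (k1 - 1) ((k1 - h) div 2 - 1) @ mirror_pairs 0 (2*n - 1) (h - 1)"

lemma sigma0_form_eq: "sigma0_form n h k1 k2 = tlist_prod (sigma0_pairs n h k1 k2)"
proof -
  have mirror: "tprod m (\<lambda>j. p + j) (\<lambda>j. q + 1 - j) = tlist_prod (mirror_pairs p q m)"
    for m p q by (simp add: tprod_def mirror_pairs_def)
  have mirror0: "tprod h (\<lambda>i. i) (\<lambda>i. 2*n + 1 - i) = tlist_prod (mirror_pairs 0 (2*n) h)"
    by (simp add: tprod_def mirror_pairs_def)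
  show ?thesis unfolding sigma0_form_def mirror0 mirror pmul_tlist_prod sigma0_pairs_def by simp
qed

lemma s1tau_form_eq:
  "s1tau_form n h k1 k2 =
     pmul (tlist_prod (s1tau_pairs n h k1 k2)) (cycle_of_list [2*n - h, h, k1, k2])"
proof -
  have mirror: "tprod m (\<lambda>j. p + j) (\<lambda>j. q - j) = tlist_prod (mirror_pairs p (q - 1) m)"
    for m p q
    unfolding tprod_def mirror_pairs_def by (rule arg_cong[where f=tlist_prod], rule map_cong) auto
  have mirror0: "tprod m (\<lambda>i. i) (\<lambda>i. q - i) = tlist_prod (mirror_pairs 0 (q - 1) m)" for m q
    using mirror[of m 0 q] by simp
  show ?thesis unfolding s1tau_form_def mirror0 mirror pmul_tlist_prod s1tau_pairs_def by simp
qed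

lemma sigma0_pairs_blocks:
  assumes "k1 = h + 2*a" "k2 = k1 + 2*b" "2*n = k2 + 2*c + h"
  shows "sigma0_pairs n h k1 k2 =
    mirror_pairs k2 (k2 + 2*c) c @ mirror_pairs k1 k2 b @ mirror_pairs h k1 a @ mirror_pairs 0 (2*n) h"
  using assms by (simp add: sigma0_pairs_def algebra_simps)

lemma s1tau_pairs_blocks:
  assumes "k1 = h + 2*a" "k2 = k1 + 2*b" "2*n = k2 + 2*c + h"
  shows "s1tau_pairs n h k1 k2 =
    mirror_pairs k2 (k2 + 2*c - 1) (c - 1) @ mirror_pairs k1 (k1 + 2*b - 1) (b - 1)
    @ mirror_pairs h (h + 2*a - 1) (a - 1) @ mirror_pairs 0 (2*n - 1) (h - 1)"
  using assms by (simp add: s1tau_pairs_def algebra_simps)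

lemma sigma0_pairs_props:
  assumes "valid_triple n h k1 k2"
  shows "distinct (flat_pairs (sigma0_pairs n h k1 k2))"
    "set (flat_pairs (sigma0_pairs n h k1 k2)) = idx n"
    "length (sigma0_pairs n h k1 k2) = n"
proof -
  obtain a b c where e: "k1 = h + 2*a" "k2 = k1 + 2*b" "2*n = k2 + 2*c + h"
    "1 \<le> a" "1 \<le> b" "1 \<le> c" "1 \<le> h"
    using valid_tripleE[OF assms] by blast
  have blocks: "set (flat_pairs (mirror_pairs 0 (2*n) h)) = {1..h} \<union> {2*n+1-h..2*n}"
    "set (flat_pairs (mirror_pairs h k1 a)) = {h+1..k1}"
    "set (flat_pairs (mirror_pairs k1 k2 b)) = {k1+1..k2}"
    "set (flat_pairs (mirror_pairs k2 (k2 + 2*c) c)) = {k2+1..2*n-h}"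
    using e by (subst set_mirror_pairs; force)+
  have "distinct (flat_pairs (mirror_pairs 0 (2*n) h))" "distinct (flat_pairs (mirror_pairs h k1 a))"
    "distinct (flat_pairs (mirror_pairs k1 k2 b))"
    "distinct (flat_pairs (mirror_pairs k2 (k2 + 2*c) c))"
    using e by (auto intro!: distinct_mirror_pairs)
  with blocks e show "distinct (flat_pairs (sigma0_pairs n h k1 k2))"
    "set (flat_pairs (sigma0_pairs n h k1 k2)) = idx n"
    "length (sigma0_pairs n h k1 k2) = n"
    unfolding sigma0_pairs_blocks[OF e(1-3)] by (auto simp: idx_def)
qed

lemma sigma0_form_apply:
  assumes "valid_triple n h k1 k2"
  shows "sigma0_form n h k1 k2 x = (if x \<in> idx n then sigma0_fun n h k1 k2 x else x)"
proof -
  obtain a b c where e: "k1 = h + 2*a" "k2 = k1 + 2*b" "2*n = k2 + 2*c + h"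
    "1 \<le> a" "1 \<le> b" "1 \<le> c" "1 \<le> h"
    using valid_tripleE[OF assms] by blast
  note L = sigma0_pairs_props[OF assms]
  have sub: "set (mirror_pairs 0 (2*n) h) \<subseteq> set (sigma0_pairs n h k1 k2)"
    "set (mirror_pairs h k1 a) \<subseteq> set (sigma0_pairs n h k1 k2)"
    "set (mirror_pairs k1 k2 b) \<subseteq> set (sigma0_pairs n h k1 k2)"
    "set (mirror_pairs k2 (k2 + 2*c) c) \<subseteq> set (sigma0_pairs n h k1 k2)"
    unfolding sigma0_pairs_blocks[OF e(1-3)] by auto
  show ?thesis
  proof (cases "x \<in> idx n")
    case False
    then show ?thesis using L tlist_prod_outside by (simp add: sigma0_form_eq)
  next
    case True
    then have x: "1 \<le> x" "x \<le> 2*n" by (auto simp: idx_def)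
    consider "x \<le> h \<or> 2*n - h < x" | "h < x" "x \<le> k1" | "k1 < x" "x \<le> k2" | "k2 < x" "x \<le> 2*n - h"
      by linarith
    then show ?thesis
    proof cases
      case 1
      have "tlist_prod (sigma0_pairs n h k1 k2) x = 0 + 2*n + 1 - x"
        by (rule tlist_prod_mirror[OF L(1) sub(1)]) (use 1 x e in auto)
      then show ?thesis using True 1 by (simp add: sigma0_fun_def sigma0_form_eq)
    next
      case 2
      have "tlist_prod (sigma0_pairs n h k1 k2) x = h + k1 + 1 - x"
        by (rule tlist_prod_mirror[OF L(1) sub(2)]) (use 2 e in auto)
      then show ?thesis using True 2 e by (simp add: sigma0_fun_def sigma0_form_eq)
    next
      case 3
      have "tlist_prod (sigma0_pairs n h k1 k2) x = k1 + k2 + 1 - x"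
        by (rule tlist_prod_mirror[OF L(1) sub(3)]) (use 3 e in auto)
      then show ?thesis using True 3 e by (simp add: sigma0_fun_def sigma0_form_eq)
    next
      case 4
      have "tlist_prod (sigma0_pairs n h k1 k2) x = k2 + (k2 + 2*c) + 1 - x"
        by (rule tlist_prod_mirror[OF L(1) sub(4)]) (use 4 e in auto)
      then show ?thesis using True 4 e by (simp add: sigma0_fun_def sigma0_form_eq)
    qed
  qed
qed

lemma s1tau_pairs_props:
  assumes "valid_triple n h k1 k2"
  shows "distinct (flat_pairs (s1tau_pairs n h k1 k2))"
    "set (flat_pairs (s1tau_pairs n h k1 k2)) \<subseteq>
       {1..<2*n} - {h, k1, k2, 2*n - h, (h + k1) div 2, (k1 + k2) div 2, (k2 + 2*n - h) div 2}"
    "length (s1tau_pairs n h k1 k2) = n - 4"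
proof -
  obtain a b c where e: "k1 = h + 2*a" "k2 = k1 + 2*b" "2*n = k2 + 2*c + h"
    "1 \<le> a" "1 \<le> b" "1 \<le> c" "1 \<le> h"
    using valid_tripleE[OF assms] by blast
  define Q1 Q2 Q3 Q4 where "Q1 = mirror_pairs 0 (2*n - 1) (h - 1)"
    and "Q2 = mirror_pairs h (h + 2*a - 1) (a - 1)"
    and "Q3 = mirror_pairs k1 (k1 + 2*b - 1) (b - 1)"
    and "Q4 = mirror_pairs k2 (k2 + 2*c - 1) (c - 1)"
  have L: "s1tau_pairs n h k1 k2 = Q4 @ Q3 @ Q2 @ Q1"
    unfolding s1tau_pairs_blocks[OF e(1-3)] Q1_def Q2_def Q3_def Q4_def ..
  have mid: "(h + k1) div 2 = h + a" "(k1 + k2) div 2 = k1 + b" "(k2 + 2*n - h) div 2 = k2 + c"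
    using e by auto
  have blocks: "set (flat_pairs Q1) = {1..<h} \<union> {2*n-h<..<2*n}"
    "set (flat_pairs Q2) = {h<..<h+a} \<union> {h+a<..<k1}"
    "set (flat_pairs Q3) = {k1<..<k1+b} \<union> {k1+b<..<k2}"
    "set (flat_pairs Q4) = {k2<..<k2+c} \<union> {k2+c<..<2*n-h}"
    unfolding Q1_def Q2_def Q3_def Q4_def using e by (subst set_mirror_pairs; force)+
  have "distinct (flat_pairs Q1)" "distinct (flat_pairs Q2)" "distinct (flat_pairs Q3)"
    "distinct (flat_pairs Q4)"
    unfolding Q1_def Q2_def Q3_def Q4_def using e by (auto intro!: distinct_mirror_pairs)
  moreover have "set (flat_pairs Q1) \<subseteq> {0<..<h} \<union> {2*n-h<..<2*n}"
    "set (flat_pairs Q2) \<subseteq> {h<..<k1}" "set (flat_pairs Q3) \<subseteq> {k1<..<k2}"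
    "set (flat_pairs Q4) \<subseteq> {k2<..<2*n-h}"
    unfolding blocks using e by auto
  moreover have "({0<..<h} \<union> {2*n-h<..<2*n}) \<inter> {h<..<k1} = {}"
    "({0<..<h} \<union> {2*n-h<..<2*n}) \<inter> {k1<..<k2} = {}"
    "({0<..<h} \<union> {2*n-h<..<2*n}) \<inter> {k2<..<2*n-h} = {}" "{h<..<k1} \<inter> {k1<..<k2} = {}"
    "{h<..<k1} \<inter> {k2<..<2*n-h} = {}" "{k1<..<k2} \<inter> {k2<..<2*n-h} = {}"
    using e by auto
  ultimately show "distinct (flat_pairs (s1tau_pairs n h k1 k2))"
    unfolding L flat_pairs_simps distinct_append set_append by blast
  have "set (flat_pairs Q1) \<subseteq> {1..<2*n} - {h, k1, k2, 2*n - h, h + a, k1 + b, k2 + c}"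
    "set (flat_pairs Q2) \<subseteq> {1..<2*n} - {h, k1, k2, 2*n - h, h + a, k1 + b, k2 + c}"
    "set (flat_pairs Q3) \<subseteq> {1..<2*n} - {h, k1, k2, 2*n - h, h + a, k1 + b, k2 + c}"
    "set (flat_pairs Q4) \<subseteq> {1..<2*n} - {h, k1, k2, 2*n - h, h + a, k1 + b, k2 + c}"
    unfolding blocks using e by auto
  then show "set (flat_pairs (s1tau_pairs n h k1 k2)) \<subseteq>
       {1..<2*n} - {h, k1, k2, 2*n - h, (h + k1) div 2, (k1 + k2) div 2, (k2 + 2*n - h) div 2}"
    unfolding L mid by auto
  show "length (s1tau_pairs n h k1 k2) = n - 4"
    unfolding L Q1_def Q2_def Q3_def Q4_def using e by simp
qed

lemma tlist_prod_s1tau_pairs: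
  assumes "valid_triple n h k1 k2"
  shows "tlist_prod (s1tau_pairs n h k1 k2) x =
    (if 1 \<le> x \<and> x < 2*n \<and> x \<notin> {h, k1, k2, 2*n - h} then sigma0_fun n h k1 k2 (x + 1) else x)"
proof -
  obtain a b c where e: "k1 = h + 2*a" "k2 = k1 + 2*b" "2*n = k2 + 2*c + h"
    "1 \<le> a" "1 \<le> b" "1 \<le> c" "1 \<le> h"
    using valid_tripleE[OF assms] by blast
  let ?L = "s1tau_pairs n h k1 k2"
  note L = s1tau_pairs_props[OF assms]
  have mid: "(h + k1) div 2 = h + a" "(k1 + k2) div 2 = k1 + b" "(k2 + 2*n - h) div 2 = k2 + c"
    using e by auto
  have fixed: "tlist_prod ?L y = y"
    if "y = 0 \<or> 2*n \<le> y \<or> y \<in> {h, k1, k2, 2*n - h, h + a, k1 + b, k2 + c}" for y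
    using that L(2) unfolding mid by (intro tlist_prod_outside) auto
  have sub: "set (mirror_pairs 0 (2*n - 1) (h - 1)) \<subseteq> set ?L"
    "set (mirror_pairs h (h + 2*a - 1) (a - 1)) \<subseteq> set ?L"
    "set (mirror_pairs k1 (k1 + 2*b - 1) (b - 1)) \<subseteq> set ?L"
    "set (mirror_pairs k2 (k2 + 2*c - 1) (c - 1)) \<subseteq> set ?L"
    unfolding s1tau_pairs_blocks[OF e(1-3)] by auto
  have mirror_mid: "h + a \<notin> set (flat_pairs ?L)" "k1 + b \<notin> set (flat_pairs ?L)"
    "k2 + c \<notin> set (flat_pairs ?L)"
    using L(2) unfolding mid by auto
  have outer: "tlist_prod ?L x = 2*n - x" if "0 < x" "x < h \<or> 2*n - h < x" "x < 2*n"
  proof -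
    have "tlist_prod ?L x = 0 + (2*n - 1) + 1 - x"
      by (rule tlist_prod_mirror[OF L(1) sub(1)]) (use that e in auto)
    then show ?thesis using that by simp
  qed
  show ?thesis
  proof (cases rule: split_at_four_points[where x=x and p=h and q=k1 and r=k2 and s="2*n - h"])
    case 1
    then show ?thesis using outer fixed e by (cases "x = 0") (auto simp: sigma0_fun_def)
  next
    case 3
    have "tlist_prod ?L x = 2*h + 2*a - x"
      by (rule tlist_prod_mirror_odd[OF L(1) sub(2) mirror_mid(1)]) (use 3 e in auto)
    then show ?thesis using 3 e by (auto simp: sigma0_fun_def)
  next
    case 5
    have "tlist_prod ?L x = 2*k1 + 2*b - x"
      by (rule tlist_prod_mirror_odd[OF L(1) sub(3) mirror_mid(2)]) (use 5 e in auto)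
    then show ?thesis using 5 e by (auto simp: sigma0_fun_def)
  next
    case 7
    have "tlist_prod ?L x = 2*k2 + 2*c - x"
      by (rule tlist_prod_mirror_odd[OF L(1) sub(4) mirror_mid(3)]) (use 7 e in auto)
    then show ?thesis using 7 e by (auto simp: sigma0_fun_def)
  next
    case 9
    then show ?thesis using outer fixed e by (cases "2*n \<le> x") (auto simp: sigma0_fun_def)
  qed (use fixed in auto)
qed

lemma s1tau_form_apply:
  assumes "valid_triple n h k1 k2"
  shows "s1tau_form n h k1 k2 x = s1tau_fun n h k1 k2 x"
proof -
  obtain a b c where e: "k1 = h + 2*a" "k2 = k1 + 2*b" "2*n = k2 + 2*c + h"
    "1 \<le> a" "1 \<le> b" "1 \<le> c" "1 \<le> h"
    using valid_tripleE[OF assms] by blast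
  have dist: "distinct [2*n - h, h, k1, k2]" using e by auto
  have "s1tau_form n h k1 k2 x =
      cycle_of_list [2*n - h, h, k1, k2] (tlist_prod (s1tau_pairs n h k1 k2) x)"
    by (simp add: s1tau_form_eq pmul_def)
  also have "\<dots> = s1tau_fun n h k1 k2 x"
  proof (cases "1 \<le> x \<and> x < 2*n \<and> x \<notin> {h, k1, k2, 2*n - h}")
    case True
    have "sigma0_fun n h k1 k2 (x + 1) \<notin> {2*n - h, h, k1, k2}"
      using True e
      by (cases rule: split_at_four_points[where x=x and p=h and q=k1 and r=k2 and s="2*n - h"]) (auto simp: sigma0_fun_def)
    then show ?thesis using True cycle_of_list_4(5)[OF dist]
      by (simp add: tlist_prod_s1tau_pairs[OF assms] s1tau_fun_def)
  next
    case False
    then have "tlist_prod (s1tau_pairs n h k1 k2) x = x"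
      by (simp only: tlist_prod_s1tau_pairs[OF assms] if_not_P[OF False] if_False)
    moreover have "cycle_of_list [2*n - h, h, k1, k2] x = s1tau_fun n h k1 k2 x"
      using False cycle_of_list_4[OF dist] e
      by (cases "x \<in> {h, k1, k2, 2*n - h}") (auto simp: s1tau_fun_def sigma0_fun_def)
    ultimately show ?thesis by simp
  qed
  finally show ?thesis .
qed

lemma sigma0_fun_involution:
  assumes "valid_triple n h k1 k2" "x \<in> idx n"
  shows "sigma0_fun n h k1 k2 x \<in> idx n \<and> sigma0_fun n h k1 k2 (sigma0_fun n h k1 k2 x) = x
    \<and> sigma0_fun n h k1 k2 x \<noteq> x"
proof -
  obtain a b c where e: "k1 = h + 2*a" "k2 = k1 + 2*b" "2*n = k2 + 2*c + h"
    "1 \<le> a" "1 \<le> b" "1 \<le> c" "1 \<le> h"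
    using valid_tripleE[OF assms(1)] by blast
  have x: "1 \<le> x" "x \<le> 2*n" using assms(2) by (auto simp: idx_def)
  have odd_sum: "odd (p + q)" if "Suc (p + q) - x = x" for p q :: nat
    using that by presburger
  show ?thesis
    using x e
    by (cases rule: split_at_four_points[where x=x and p=h and q=k1 and r=k2 and s="2*n - h"])
      (auto simp: sigma0_fun_def idx_def dest: odd_sum)
qed

lemma s1tau_fun_on_cycle:
  assumes "valid_triple n h k1 k2"
  shows "s1tau_fun n h k1 k2 h = k1" "s1tau_fun n h k1 k2 k1 = k2"
    "s1tau_fun n h k1 k2 k2 = 2*n - h" "s1tau_fun n h k1 k2 (2*n - h) = h"
  using assms by (auto simp: s1tau_fun_def sigma0_fun_def valid_triple_def)

lemma s1tau_fun_off_cycle: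
  assumes "valid_triple n h k1 k2" "x \<notin> {h, k1, k2, 2*n - h}"
  shows "s1tau_fun n h k1 k2 x \<notin> {h, k1, k2, 2*n - h} \<and>
    s1tau_fun n h k1 k2 (s1tau_fun n h k1 k2 x) = x"
proof -
  obtain a b c where e: "k1 = h + 2*a" "k2 = k1 + 2*b" "2*n = k2 + 2*c + h"
    "1 \<le> a" "1 \<le> b" "1 \<le> c" "1 \<le> h"
    using valid_tripleE[OF assms(1)] by blast
  show ?thesis
    using e assms(2)
    by (cases rule: split_at_four_points[where x=x and p=h and q=k1 and r=k2 and s="2*n - h"])
      (auto simp: s1tau_fun_def sigma0_fun_def)
qed

lemma fixed_points_s1tau_fun:
  assumes "valid_triple n h k1 k2"
  shows "{x \<in> idx n. s1tau_fun n h k1 k2 x = x} =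
    {2*n, (k1 + h) div 2, (k1 + k2) div 2, (2*n - h + k2) div 2}"
proof -
  obtain a b c where e: "k1 = h + 2*a" "k2 = k1 + 2*b" "2*n = k2 + 2*c + h"
    "1 \<le> a" "1 \<le> b" "1 \<le> c" "1 \<le> h"
    using valid_tripleE[OF assms] by blast
  have mid: "(k1 + h) div 2 = h + a" "(k1 + k2) div 2 = k1 + b" "(2*n - h + k2) div 2 = k2 + c"
    using e by auto
  have "x \<in> idx n \<and> s1tau_fun n h k1 k2 x = x \<longleftrightarrow> x = 2*n \<or> x = h + a \<or> x = k1 + b \<or> x = k2 + c"
    for x
    using e
    by (cases rule: split_at_four_points[where x=x and p=h and q=k1 and r=k2 and s="2*n - h"])
      (auto simp: s1tau_fun_def sigma0_fun_def idx_def)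
  then show ?thesis unfolding mid by auto
qed

lemma s1tau_fun_sigma_inf_sigma0_fun:
  assumes "valid_triple n h k1 k2" "x \<in> idx n"
  shows "s1tau_fun n h k1 k2 (sigma_inf_std n (sigma0_fun n h k1 k2 x)) = x"
proof (cases "sigma0_fun n h k1 k2 x = 1")
  case True
  then have "x = sigma0_fun n h k1 k2 1" using sigma0_fun_involution[OF assms] by simp
  also have "\<dots> = 2*n" using assms(1) by (simp add: sigma0_fun_def valid_triple_def)
  finally show ?thesis using True assms(2) sigma_inf_std_apply[of 1 n]
    by (simp add: s1tau_fun_def idx_def)
next
  case False
  then show ?thesis
    using sigma0_fun_involution[OF assms] sigma_inf_std_apply[of "sigma0_fun n h k1 k2 x" n]
    by (auto simp: s1tau_fun_def idx_def)
qed

lemma s1tau_form_four_cycle: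
  assumes "valid_triple n h k1 k2"
  shows "four_cycle (s1tau_form n h k1 k2) h k1 k2 (2*n - h)"
proof -
  obtain a b c where "k1 = h + 2*a" "k2 = k1 + 2*b" "2*n = k2 + 2*c + h" "1 \<le> a" "1 \<le> b" "1 \<le> c"
    using valid_tripleE[OF assms] by blast
  then have "distinct [h, k1, k2, 2*n - h]" by auto
  then show ?thesis
    using s1tau_fun_on_cycle[OF assms] by (simp add: four_cycle_def s1tau_form_apply[OF assms])
qed

lemma s1tau_form_off_cycle:
  assumes "valid_triple n h k1 k2" "x \<notin> {h, k1, k2, 2*n - h}"
  shows "s1tau_form n h k1 k2 x = tlist_prod (s1tau_pairs n h k1 k2) x"
    "s1tau_form n h k1 k2 x \<notin> {h, k1, k2, 2*n - h}"
  using assms s1tau_fun_off_cycle[OF assms]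
  by (auto simp: s1tau_form_apply tlist_prod_s1tau_pairs s1tau_fun_def)

lemma s1tau_form_sigma_inf_sigma0_form:
  assumes "valid_triple n h k1 k2"
  shows "s1tau_form n h k1 k2 (sigma_inf_std n (sigma0_form n h k1 k2 x)) = x"
proof (cases "x \<in> idx n")
  case True
  then show ?thesis
    using s1tau_fun_sigma_inf_sigma0_fun[OF assms True]
    by (simp add: sigma0_form_apply[OF assms] s1tau_form_apply[OF assms])
next
  case False
  moreover have "s1tau_fun n h k1 k2 x = x" using False by (auto simp: s1tau_fun_def idx_def)
  ultimately show ?thesis
    by (simp add: sigma0_form_apply[OF assms] s1tau_form_apply[OF assms] sigma_inf_std_outside)
qed

lemma special_shift:
  assumes "special n (s0, sinf, s1, t)"
  shows "\<And>x. x \<in> idx n \<Longrightarrow> s0 x \<in> idx n \<and> s0 x \<noteq> x \<and> s0 (s0 x) = x"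
    and "\<And>x. x \<notin> idx n \<Longrightarrow> s0 x = x"
    and "\<And>y. 1 \<le> y \<Longrightarrow> y < 2*n \<Longrightarrow> pmul s1 t y = s0 (y + 1)"
    and "pmul s1 t (2*n) = 2*n" and "s0 1 = 2*n"
proof -
  from assms have n: "2 \<le> n" and s0: "disj_transp_prod (idx n) n s0"
    and prod: "pmul (pmul (pmul s0 sinf) s1) t = id" and sinf: "sinf = sigma_inf_std n"
    and fix2n: "s1 (2*n) = 2*n" "t (2*n) = 2*n"
    unfolding special_def admissible_def by auto
  show s0_inv: "s0 x \<in> idx n \<and> s0 x \<noteq> x \<and> s0 (s0 x) = x" if "x \<in> idx n" for x
    using disj_transp_prod_perfect[OF s0] disj_transp_prod_involution[OF s0] that
    by (simp add: idx_def)
  show "s0 x = x" if "x \<notin> idx n" for x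
    using disj_transp_prod_perfect[OF s0] that by (simp add: idx_def)
  have P_sigma_inf_M: "pmul s1 t (sinf (s0 x)) = x" for x
    using fun_cong[OF prod, of x] by (simp add: pmul_def)
  show "pmul s1 t y = s0 (y + 1)" if "1 \<le> y" "y < 2*n" for y
  proof -
    have "sinf (y + 1) = y" unfolding sinf using sigma_inf_std_apply[of "y + 1" n] that by simp
    then show ?thesis using P_sigma_inf_M[of "s0 (y + 1)"] s0_inv[of "y + 1"] that by (simp add: idx_def)
  qed
  show fixed: "pmul s1 t (2*n) = 2*n" using fix2n by (simp add: pmul_def)
  have "sinf 1 = 2*n" unfolding sinf using sigma_inf_std_apply[of 1 n] n by simp
  then show "s0 1 = 2*n" using P_sigma_inf_M[of "s0 1"] s0_inv[of 1] fixed n by (simp add: idx_def)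
qed

text \<open>\<open>M\<close> stands for \<open>\<sigma>\<^sub>0\<close>, \<open>P\<close> for \<open>\<sigma>\<^sub>1\<tau>\<close>, and \<open>h < k\<^sub>1 < k\<^sub>2 < g\<close> are the
  points of the 4-cycle of \<open>P\<close>.\<close>
locale shifted_matching =
  fixes n :: nat and M P :: "nat \<Rightarrow> nat" and h k1 k2 g :: nat
  assumes M_involution: "x \<in> idx n \<Longrightarrow> M x \<in> idx n \<and> M x \<noteq> x \<and> M (M x) = x"
    and P_shift: "1 \<le> y \<Longrightarrow> y < 2*n \<Longrightarrow> P y = M (y + 1)"
    and P_2n: "P (2*n) = 2*n"
    and M_1: "M 1 = 2*n"
    and sorted: "h < k1" "k1 < k2" "k2 < g"
    and cycle: "\<exists>a b c e. four_cycle P a b c e \<and> {a,b,c,e} = {h,k1,k2,g}"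
    and cycle_idx: "{h,k1,k2,g} \<subseteq> idx n"
    and off_cycle: "y \<notin> {h,k1,k2,g} \<Longrightarrow> P (P y) = y"
begin

lemma P_cycle: "x \<in> {h,k1,k2,g} \<Longrightarrow> P x \<in> {h,k1,k2,g} \<and> P x \<noteq> x"
  using cycle four_cycle_closed four_cycle_moves by metis

lemma cycle_shift:
  assumes "x \<in> {h,k1,k2,g}"
  shows "1 \<le> x \<and> x < 2*n \<and> P x = M (x + 1)"
proof -
  have "x \<in> idx n" "x \<noteq> 2*n" using assms cycle_idx P_cycle[OF assms] P_2n by auto
  then show ?thesis using P_shift[of x] by (simp add: idx_def)
qed

lemma M_2n: "M (2*n) = 1"
  using M_involution[of 1] M_1 cycle_idx by (auto simp: idx_def)

lemma M_recurrence:
  assumes "1 \<le> y" "y < 2*n" "y \<notin> {h,k1,k2,g}"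
  shows "M y = M (y + 1) + 1"
proof -
  define z where "z = P y"
  have z: "z = M (y + 1)" "z \<in> idx n" using P_shift M_involution[of "y + 1"] assms
    by (auto simp: z_def idx_def)
  have Pz: "P z = y" using off_cycle assms(3) by (simp add: z_def)
  then have "z \<noteq> 2*n" using P_2n assms(2) by auto
  then have "M (z + 1) = y" using Pz P_shift[of z] z(2) by (simp add: idx_def)
  then have "M y = z + 1" using M_involution[of "z + 1"] z(2) \<open>z \<noteq> 2*n\<close> by (auto simp: idx_def)
  then show ?thesis using z(1) by simp
qed

lemma M_plus_const:
  assumes "p < x" "x \<le> y" "y \<le> q" "q \<le> 2*n" "\<And>z. p < z \<Longrightarrow> z < q \<Longrightarrow> z \<notin> {h,k1,k2,g}"
  shows "M y + y = M x + x"
  using assms(2,3)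
proof (induction y rule: dec_induct)
  case (step y)
  then have "M y = M (y + 1) + 1" using assms by (intro M_recurrence) auto
  with step show ?case by simp
qed simp

lemma M_low: "1 \<le> y \<Longrightarrow> y \<le> h \<Longrightarrow> M y = 2*n + 1 - y"
  using M_plus_const[of 0 1 y h] M_1 sorted cycle_shift[of h] by fastforce

lemma M_high: "g < y \<Longrightarrow> y \<le> 2*n \<Longrightarrow> M y = 2*n + 1 - y"
  using M_plus_const[of g y "2*n" "2*n"] M_2n sorted by fastforce

lemma max_eq: "g = 2*n - h"
proof (rule ccontr)
  assume "g \<noteq> 2*n - h"
  then consider "g < 2*n - h" | "2*n - h < g" by linarith
  then show False
  proof cases
    case 1
    have h: "1 \<le> h" "h < 2*n" using cycle_shift[of h] by auto
    have "M (2*n - h) = h + 1" using M_high[of "2*n - h"] 1 h by simp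
    then have "M (h + 1) = 2*n - h" using M_involution[of "2*n - h"] h by (auto simp: idx_def)
    then have "P h \<in> {h,k1,k2,g}" "P h = 2*n - h" using cycle_shift[of h] P_cycle[of h] by auto
    then show False using 1 sorted by auto
  next
    case 2
    have g: "1 \<le> g" "g < 2*n" using cycle_shift[of g] by auto
    have "M (2*n + 1 - g) = g" using M_low[of "2*n + 1 - g"] 2 g by simp
    moreover have "2*n - g + 1 = 2*n + 1 - g" using g by simp
    ultimately have "P (2*n - g) = g" using P_shift[of "2*n - g"] g by simp
    moreover have "2*n - g < h" using 2 g by linarith
    then have "2*n - g \<notin> {h,k1,k2,g}" using sorted by auto
    ultimately have "P g = 2*n - g" using off_cycle[of "2*n - g"] by simp
    then show False using P_cycle[of g] \<open>2*n - g < h\<close> sorted by auto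
  qed
qed

lemma P_max: "P g = h"
proof -
  have "P g = M (g + 1)" "g < 2*n" "h < 2*n" using cycle_shift[of g] cycle_shift[of h] by auto
  then show ?thesis using M_high[of "g + 1"] max_eq by simp
qed

lemma P_cycle_order: "P h = k1 \<and> P k1 = k2 \<and> P k2 = g"
proof -
  obtain a b c e where abce: "four_cycle P a b c e" "{a,b,c,e} = {h,k1,k2,g}"
    using cycle by blast
  have "distinct [h,k1,k2,g]" using sorted by auto
  from four_cycle_cases[OF abce this P_max]
  consider "P h = k1 \<and> P k1 = k2 \<and> P k2 = g" | "P h = k2" "P k2 = k1" by blast
  then show ?thesis
  proof cases
    case 2
    have "M (h + 1) = k2" "M (k2 + 1) = k1" using 2 cycle_shift by auto
    then have "M k1 = k2 + 1" using M_involution[of "k2 + 1"] cycle_shift[of k2]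
      by (auto simp: idx_def)
    moreover have "M k1 + k1 = M (h + 1) + (h + 1)"
      using sorted cycle_shift[of g] by (intro M_plus_const[of h _ _ k1]) auto
    ultimately show ?thesis using \<open>M (h + 1) = k2\<close> sorted by simp
  qed
qed

lemma M_arc:
  assumes "p \<in> {h,k1,k2}" "p < y" "y \<le> P p"
  shows "M y + y = P p + p + 1"
proof -
  have "P p = M (p + 1)" "P p \<le> g" "g < 2*n"
    using assms(1) cycle_shift[of p] cycle_shift[of g] P_cycle_order sorted by auto
  moreover have "z \<notin> {h,k1,k2,g}" if "p < z" "z < P p" for z
    using that assms(1) P_cycle_order sorted by auto
  ultimately show ?thesis
    using M_plus_const[of p "p + 1" y "P p"] assms(2,3) by auto
qed

lemma same_parity:
  assumes "p < q" "q \<le> 2*n" "\<And>y. p < y \<Longrightarrow> y \<le> q \<Longrightarrow> M y + y = q + p + 1"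
  shows "p mod 2 = q mod 2"
proof (rule ccontr)
  assume "p mod 2 \<noteq> q mod 2"
  then have "\<exists>y. 2*y = p + q + 1 \<and> p < y \<and> y \<le> q" using assms(1) by presburger
  then obtain y where y: "2*y = p + q + 1" "p < y" "y \<le> q" by blast
  then have "M y = y" using assms(3)[of y] by simp
  moreover have "y \<in> idx n" using y assms(2) by (simp add: idx_def)
  ultimately show False using M_involution by blast
qed

lemma triple_valid: "valid_triple n h k1 k2"
proof -
  have bounds: "1 \<le> h" "k1 \<le> 2*n" "k2 \<le> 2*n" "k2 < 2*n - h"
    using cycle_shift[of h] cycle_shift[of k1] cycle_shift[of k2] sorted max_eq by auto
  have "h mod 2 = k1 mod 2"
    using sorted(1) bounds(2)
  proof (rule same_parity)
    show "M y + y = k1 + h + 1" if "h < y" "y \<le> k1" for y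
      using M_arc[of h y] that P_cycle_order by simp
  qed
  moreover have "k1 mod 2 = k2 mod 2"
    using sorted(2) bounds(3)
  proof (rule same_parity)
    show "M y + y = k2 + k1 + 1" if "k1 < y" "y \<le> k2" for y
      using M_arc[of k1 y] that P_cycle_order by simp
  qed
  ultimately show ?thesis using bounds sorted by (simp add: valid_triple_def)
qed

lemma M_eq_sigma0_fun:
  assumes "x \<in> idx n"
  shows "M x = sigma0_fun n h k1 k2 x"
proof -
  have x: "1 \<le> x" "x \<le> 2*n" using assms by (auto simp: idx_def)
  consider "x \<le> h \<or> g < x" | "h < x" "x \<le> k1" | "k1 < x" "x \<le> k2" | "k2 < x" "x \<le> g"
    by linarith
  then show ?thesis
  proof cases
    case 1
    then show ?thesis using x M_low[of x] M_high[of x] max_eq by (auto simp: sigma0_fun_def)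
  next
    case 2
    then show ?thesis using M_arc[of h x] P_cycle_order sorted max_eq by (simp add: sigma0_fun_def)
  next
    case 3
    then show ?thesis using M_arc[of k1 x] P_cycle_order sorted max_eq by (simp add: sigma0_fun_def)
  next
    case 4
    then show ?thesis using M_arc[of k2 x] P_cycle_order sorted max_eq by (simp add: sigma0_fun_def)
  qed
qed

lemma P_eq_s1tau_fun: "x \<in> idx n \<Longrightarrow> P x = s1tau_fun n h k1 k2 x"
  using P_shift[of x] P_2n M_eq_sigma0_fun[of "x + 1"]
  by (auto simp: s1tau_fun_def idx_def)

end

lemma special_normal_form:
  assumes sp: "special n (s0, sinf, s1, t)"
    and cyc: "transp_and_4cycle (idx n) n (pmul s1 t)"
  obtains h k1 k2 where "valid_triple n h k1 k2" "s0 = sigma0_form n h k1 k2"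
    "pmul s1 t = s1tau_form n h k1 k2"
proof -
  let ?P = "pmul s1 t"
  obtain a b c e where abce: "four_cycle ?P a b c e" "{a,b,c,e} \<subseteq> idx n"
    and off: "\<And>y. y \<notin> {a,b,c,e} \<Longrightarrow> ?P (?P y) = y"
    and out: "\<And>y. y \<notin> idx n \<Longrightarrow> ?P y = y"
    using transp_and_4cycleE[OF cyc] by blast
  obtain h k1 k2 g where sorted: "h < k1" "k1 < k2" "k2 < g" "{a,b,c,e} = {h,k1,k2,g}"
    using four_elements_sorted abce(1) unfolding four_cycle_def by blast
  interpret shifted_matching n s0 ?P h k1 k2 g
    using special_shift[OF sp] sorted abce off by unfold_locales auto
  have "s0 = sigma0_form n h k1 k2"
  proof
    fix x show "s0 x = sigma0_form n h k1 k2 x"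
      using sigma0_form_apply[OF triple_valid] M_eq_sigma0_fun special_shift(2)[OF sp] by simp
  qed
  moreover have "?P = s1tau_form n h k1 k2"
  proof
    fix x show "?P x = s1tau_form n h k1 k2 x"
      using s1tau_form_apply[OF triple_valid] P_eq_s1tau_fun out
      by (cases "x \<in> idx n") (auto simp: s1tau_fun_def idx_def)
  qed
  ultimately show ?thesis using that triple_valid by blast
qed

lemma pmul_s1tau_form_transpose:
  assumes v: "valid_triple n h k1 k2"
    and d: "(d = transpose h k2 \<and> ys = [(2*n - h, k2), (h, k1)]) \<or>
      (d = transpose k1 (2*n - h) \<and> ys = [(2*n - h, h), (k1, k2)])"
  shows "pmul (s1tau_form n h k1 k2) d = tlist_prod (s1tau_pairs n h k1 k2 @ ys)"
proof
  fix x
  let ?C = "{h, k1, k2, 2*n - h}"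
  have cyc: "four_cycle (s1tau_form n h k1 k2) h k1 k2 (2*n - h)"
    using s1tau_form_four_cycle[OF v] .
  have L: "set (flat_pairs (s1tau_pairs n h k1 k2)) \<inter> ?C = {}"
    using s1tau_pairs_props(2)[OF v] by auto
  show "pmul (s1tau_form n h k1 k2) d x = tlist_prod (s1tau_pairs n h k1 k2 @ ys) x"
  proof (cases "x \<in> ?C")
    case True
    have F: "s1tau_form n h k1 k2 h = k1" "s1tau_form n h k1 k2 k1 = k2"
      "s1tau_form n h k1 k2 k2 = 2*n - h" "s1tau_form n h k1 k2 (2*n - h) = h"
      and dist: "distinct [h, k1, k2, 2*n - h]"
      using cyc by (simp_all add: four_cycle_def)
    from True consider "x = h" | "x = k1" | "x = k2" | "x = 2*n - h" by blast
    then have "tlist_prod ys x \<in> ?C \<and> d (s1tau_form n h k1 k2 x) = tlist_prod ys x"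
      using d F dist by cases (elim disjE conjE; simp add: tlist_prod_Cons)+
    then show ?thesis
      using L tlist_prod_outside by (auto simp: pmul_def tlist_prod_append)
  next
    case False
    have "tlist_prod ys x = x" "d (s1tau_form n h k1 k2 x) = s1tau_form n h k1 k2 x"
      using d False s1tau_form_off_cycle(2)[OF v False]
      by (auto simp: tlist_prod_Cons transpose_def)
    then show ?thesis
      using s1tau_form_off_cycle(1)[OF v False] by (simp add: pmul_def tlist_prod_append)
  qed
qed

lemma special_with_transpose:
  assumes v: "valid_triple n h k1 k2" and d: "d \<in> {transpose h k2, transpose k1 (2*n - h)}"
  shows "special n (sigma0_form n h k1 k2, sigma_inf_std n, pmul (s1tau_form n h k1 k2) d, d)"
proof -
  obtain a b c where e: "k1 = h + 2*a" "k2 = k1 + 2*b" "2*n = k2 + 2*c + h"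
    "1 \<le> a" "1 \<le> b" "1 \<le> c" "1 \<le> h"
    using valid_tripleE[OF v] by blast
  let ?F = "s1tau_form n h k1 k2"
  obtain ys where ys: "(d = transpose h k2 \<and> ys = [(2*n - h, k2), (h, k1)]) \<or>
      (d = transpose k1 (2*n - h) \<and> ys = [(2*n - h, h), (k1, k2)])"
    using d by blast
  have C: "{h, k1, k2, 2*n - h} \<subseteq> idx n" and dist: "distinct [h, k1, k2, 2*n - h]"
    using e by (auto simp: idx_def)
  have "disj_transp_prod (idx n) n (sigma0_form n h k1 k2)"
    unfolding disj_transp_prod_def flat_pairs_def[symmetric] sigma0_form_eq
    using sigma0_pairs_props[OF v] by blast
  moreover have "full_cycle (idx n) (sigma_inf_std n)"
    unfolding full_cycle_def sigma_inf_std_def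
    by (rule exI[of _ "rev [1..<2*n+1]"]) (auto simp: idx_def)
  moreover have "disj_transp_prod (idx n) (n - 2) (pmul ?F d)"
  proof -
    let ?L = "s1tau_pairs n h k1 k2"
    have L: "distinct (flat_pairs ?L)" "length ?L = n - 4"
      "set (flat_pairs ?L) \<subseteq> idx n - {h, k1, k2, 2*n - h}"
      using s1tau_pairs_props[OF v] by (auto simp: idx_def)
    have "4 \<le> n" using e by auto
    then show ?thesis
      unfolding disj_transp_prod_def flat_pairs_def[symmetric] pmul_s1tau_form_transpose[OF v ys]
      using L ys C dist by (intro exI[of _ "?L @ ys"]) auto
  qed
  moreover have "is_transposition (idx n) d"
    using d C dist unfolding is_transposition_def by auto
  moreover have "pmul (pmul (pmul (sigma0_form n h k1 k2) (sigma_inf_std n)) (pmul ?F d)) d = id"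
    using d s1tau_form_sigma_inf_sigma0_form[OF v] by (auto simp: pmul_def)
  moreover have "?F (2*n) = 2*n" by (simp add: s1tau_form_apply[OF v] s1tau_fun_def)
  moreover have "2*n \<notin> {h, k1, k2, 2*n - h}" using e by auto
  then have "d (2*n) = 2*n" using d by (auto simp: transpose_def)
  ultimately show ?thesis using e unfolding special_def admissible_def by (simp add: pmul_def)
qed

lemma special_tuples_of_normal_form:
  assumes v: "valid_triple n h k1 k2"
  shows "{T. special n T \<and> fst T = sigma0_form n h k1 k2 \<and>
            (case T of (a, b, c, d) \<Rightarrow> pmul c d = s1tau_form n h k1 k2)} =
    (\<lambda>d. (sigma0_form n h k1 k2, sigma_inf_std n, pmul (s1tau_form n h k1 k2) d, d)) `
      {transpose h k2, transpose k1 (2*n - h)}"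
    (is "?S = ?tuple ` ?D")
proof
  let ?F = "s1tau_form n h k1 k2"
  show "?S \<subseteq> ?tuple ` ?D"
  proof
    fix T assume "T \<in> ?S"
    then obtain s0 sinf s1 t where T: "T = (s0, sinf, s1, t)" "special n (s0, sinf, s1, t)"
      "s0 = sigma0_form n h k1 k2" "pmul s1 t = ?F"
      by (cases T) auto
    then have sinf: "sinf = sigma_inf_std n" and t: "is_transposition (idx n) t"
      and s1: "disj_transp_prod (idx n) (n - 2) s1"
      unfolding special_def admissible_def by auto
    obtain u v where uv: "u \<noteq> v" "t = transpose u v" using t unfolding is_transposition_def by auto
    have s1_F: "s1 x = t (?F x)" for x
    proof -
      have "t (s1 x) = ?F x" using fun_cong[OF T(4), of x] by (simp add: pmul_def)
      then show ?thesis using uv(2) by (metis transpose_involutory)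
    qed
    have "transpose u v (?F (transpose u v (?F x))) = x" for x
      using disj_transp_prod_involution[OF s1, of x] s1_F uv(2) by simp
    then have "t = transpose h k2 \<or> t = transpose k1 (2*n - h)"
      using transpose_mult_four_cycle_involution[OF s1tau_form_four_cycle[OF v] uv(1)] uv(2)
      by (auto simp: transpose_commute)
    moreover have "s1 = pmul ?F t" using s1_F by (auto simp: pmul_def)
    ultimately show "T \<in> ?tuple ` ?D" using T sinf by auto
  qed
  have "pmul (pmul ?F d) d = ?F" if "d \<in> ?D" for d
    using that by (auto simp: pmul_def fun_eq_iff)
  then show "?tuple ` ?D \<subseteq> ?S" using special_with_transpose[OF v] by auto
qed

lemma card_special_tuples_of_normal_form:
  assumes v: "valid_triple n h k1 k2"
  shows "let S = {T. special n T \<and> fst T = sigma0_form n h k1 k2 \<and>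
                    (case T of (a, b, c, d) \<Rightarrow> pmul c d = s1tau_form n h k1 k2)}
         in card S = 2 \<and> (\<lambda>(a, b, c, d). d) ` S = {transpose h k2, transpose k1 (2*n - h)}"
proof -
  have "transpose h k2 h \<noteq> transpose k1 (2*n - h) h"
    using v by (auto simp: valid_triple_def)
  then have card: "card {transpose h k2, transpose k1 (2*n - h)} = 2" by (metis card_2_iff)
  have inj: "inj_on (\<lambda>d. (sigma0_form n h k1 k2, sigma_inf_std n,
      pmul (s1tau_form n h k1 k2) d, d)) {transpose h k2, transpose k1 (2*n - h)}"
    by (rule inj_onI) simp
  show ?thesis
    unfolding Let_def special_tuples_of_normal_form[OF v] card_image[OF inj] image_image
    using card by simp
qed

theorem mainTheorem16:
  fixes n :: nat and s0 sinf s1 t :: "nat \<Rightarrow> nat"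
  assumes "special n (s0, sinf, s1, t)"
    and "transp_and_4cycle (idx n) n (pmul s1 t)"
  shows "(\<exists>h k1 k2. valid_triple n h k1 k2 \<and>
            s0 = sigma0_form n h k1 k2 \<and> pmul s1 t = s1tau_form n h k1 k2 \<and>
            {x \<in> idx n. pmul s1 t x = x} =
              {2*n, (k1 + h) div 2, (k1 + k2) div 2, (2*n - h + k2) div 2})
       \<and> (\<forall>h k1 k2. valid_triple n h k1 k2 \<longrightarrow>
            (let S = {T. special n T \<and> fst T = sigma0_form n h k1 k2 \<and>
                         (case T of (a, b, c, d) \<Rightarrow> pmul c d = s1tau_form n h k1 k2)}
             in card S = 2 \<and>
                (\<lambda>(a, b, c, d). d) ` S = {transpose h k2, transpose k1 (2*n - h)}))"
proof (intro conjI allI impI)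
  obtain h k1 k2 where v: "valid_triple n h k1 k2" and forms: "s0 = sigma0_form n h k1 k2"
    "pmul s1 t = s1tau_form n h k1 k2"
    using special_normal_form[OF assms] .
  moreover have "{x \<in> idx n. pmul s1 t x = x} =
      {2*n, (k1 + h) div 2, (k1 + k2) div 2, (2*n - h + k2) div 2}"
    using fixed_points_s1tau_fun[OF v] by (simp add: forms(2) s1tau_form_apply[OF v])
  ultimately show "\<exists>h k1 k2. valid_triple n h k1 k2 \<and>
      s0 = sigma0_form n h k1 k2 \<and> pmul s1 t = s1tau_form n h k1 k2 \<and>
      {x \<in> idx n. pmul s1 t x = x} = {2*n, (k1 + h) div 2, (k1 + k2) div 2, (2*n - h + k2) div 2}"
    by blast
qed (rule card_special_tuples_of_normal_form)

end
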